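(* Every almost zero-dimensional space that is rim-$\sigma$C is zero-dimensional.
   Context: All spaces are separable and metrizable. A subset $A$ of $X$ is a C-set in $X$ if it is an intersection of clopen subsets of $X$; a $\sigma$C-set is a countable union of C-sets. $X$ is almost zero-dimensional if every point has a neighborhood basis consisting of C-sets in $X$. For a property P, $X$ is rim-P if $X$ has a basis of open sets whose boundaries have property P; rim-$\sigma$C means the boundaries are $\sigma$C-sets in $X$. *)

theory Defs
  imports "HOL-Analysis.Analysis"
begin

text \<open>A C-set in X: an intersection of clopen subsets of X (the empty intersection being
  the whole space).\<close>
definition C_set :: "'a topology \<Rightarrow> 'a set \<Rightarrow> bool" where
  "C_set X A \<longleftrightarrow>
     (\<exists>\<U>. (\<forall>U\<in>\<U>. closedin X U \<and> openin X U) \<and> A = topspace X \<inter> \<Inter>\<U>)"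

definition sigmaC_set :: "'a topology \<Rightarrow> 'a set \<Rightarrow> bool" where
  "sigmaC_set X A \<longleftrightarrow> (\<exists>F :: nat \<Rightarrow> 'a set. (\<forall>n. C_set X (F n)) \<and> A = (\<Union>n. F n))"

definition almost_zero_dimensional :: "'a topology \<Rightarrow> bool" where
  "almost_zero_dimensional X \<longleftrightarrow> neighbourhood_base_of (C_set X) X"

definition rim_sigmaC :: "'a topology \<Rightarrow> bool" where
  "rim_sigmaC X \<longleftrightarrow>
     (\<exists>\<B>. (\<forall>B\<in>\<B>. openin X B \<and> sigmaC_set X (X frontier_of B)) \<and>
          (\<forall>U. openin X U \<longrightarrow> (\<exists>\<V>. \<V> \<subseteq> \<B> \<and> \<Union>\<V> = U)))"

end

theory Submission
  imports Defs
begin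

text \<open>A separable metrizable space is second countable, hence hereditarily Lindel\<ouml>f. Two
  disjoint C-sets are then separated by a clopen set: countably many clopen sets, each missing
  one of them, cover the space, and after disjointifying the cover the pieces missing the second
  set have clopen union. Given a closed \<sigma>C-set \<open>A = \<Union>n. F n\<close> and a point \<open>x \<notin> A\<close>, cover
  the complement of \<open>A\<close> by countably many open sets \<open>q k\<close> lying in C-sets \<open>W k\<close> disjoint
  from \<open>A\<close>, and choose clopen \<open>D n \<supseteq> F n\<close> missing \<open>x\<close> and \<open>W 0, \<dots>, W n\<close>; off \<open>A\<close> the family
  \<open>D\<close> is locally finite, so its union is a clopen set containing \<open>A\<close> but not \<open>x\<close>. Applied to
  the frontier of a basic open set \<open>B \<ni> x\<close>, this yields a clopen set inside \<open>B\<close> containing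
  \<open>x\<close>.\<close>

lemma (in Metric_space) second_countable_mtopology:
  assumes "separable_space mtopology"
  shows "second_countable mtopology"
proof -
  obtain C where C: "countable C" "C \<subseteq> M" "mtopology closure_of C = M"
    using assms unfolding separable_space_def by auto
  define \<B> where "\<B> = (\<lambda>(c, n). mball c (1 / Suc n)) ` (C \<times> (UNIV :: nat set))"
  have "\<exists>V\<in>\<B>. x \<in> V \<and> V \<subseteq> U" if U: "openin mtopology U" "x \<in> U" for U x
  proof -
    obtain r where "r > 0" "mball x r \<subseteq> U" "x \<in> M"
      using U unfolding openin_mtopology by blast
    obtain n :: nat where n: "1 / Suc n < r / 2"
      using \<open>r > 0\<close> by (metis half_gt_zero nat_approx_posE)
    have "\<forall>r>0. \<exists>c\<in>C. c \<in> mball x r"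
      using C(3) \<open>x \<in> M\<close> unfolding metric_closure_of by blast
    moreover have "(0::real) < 1 / Suc n"
      by simp
    ultimately obtain c where "c \<in> C" "c \<in> mball x (1 / Suc n)"
      by blast
    then have "x \<in> mball c (1 / Suc n)"
      by (simp add: commute)
    moreover have "mball c (1 / Suc n) \<subseteq> mball x r"
      using \<open>c \<in> mball x (1 / Suc n)\<close> n by (intro mball_subset) (auto simp: commute)
    moreover have "mball c (1 / Suc n) \<in> \<B>"
      using \<open>c \<in> C\<close> unfolding \<B>_def by (auto intro: image_eqI[where x = "(c, n)"])
    ultimately show ?thesis
      using \<open>mball x r \<subseteq> U\<close> by blast
  qed
  moreover have "countable \<B>"
    using C(1) unfolding \<B>_def by simp
  moreover have "\<forall>V\<in>\<B>. openin mtopology V"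
    unfolding \<B>_def by auto
  ultimately show ?thesis
    unfolding second_countable_def by blast
qed

lemma metrizable_separable_imp_second_countable:
  assumes "metrizable_space X" "separable_space X"
  shows "second_countable X"
proof -
  obtain M d where "Metric_space M d" "X = Metric_space.mtopology M d"
    using assms(1) unfolding metrizable_space_def by blast
  with assms(2) show ?thesis
    using Metric_space.second_countable_mtopology by blast
qed

lemma second_countable_obtain_subcover_sequence:
  assumes "second_countable X" "\<And>U. U \<in> \<U> \<Longrightarrow> openin X U" "S \<subseteq> \<Union>\<U>" "S \<noteq> {}"
  obtains q :: "nat \<Rightarrow> 'a set" where "\<And>n. q n \<in> \<U>" "S \<subseteq> (\<Union>n. q n)"
proof -
  have "S \<subseteq> topspace X"
    using assms(2,3) openin_subset by blast
  moreover have "Lindelof_space (subtopology X S)"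
    using assms(1) by (simp add: second_countable_imp_Lindelof_space second_countable_subtopology)
  ultimately obtain \<V> where \<V>: "countable \<V>" "\<V> \<subseteq> \<U>" "S \<subseteq> \<Union>\<V>"
    using assms(2,3) Lindelof_space_subtopology_subset by metis
  then have "\<V> \<noteq> {}"
    using assms(4) by auto
  then have "range (from_nat_into \<V>) = \<V>"
    using \<V>(1) by (rule range_from_nat_into)
  then show thesis
    using that \<V>(2,3) by (metis range_subsetD)
qed

lemma C_set_subset_topspace: "C_set X G \<Longrightarrow> G \<subseteq> topspace X"
  unfolding C_set_def by blast

lemma C_set_obtain_clopen_superset:
  assumes "C_set X G" "z \<in> topspace X" "z \<notin> G"
  obtains U where "closedin X U" "openin X U" "G \<subseteq> U" "z \<notin> U"
  using assms unfolding C_set_def by blast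

lemma closedin_Union_eventually_disjoint:
  fixes D :: "nat \<Rightarrow> 'a set"
  assumes closed: "\<And>n. closedin X (D n)"
    and nbhd: "\<And>y. y \<in> topspace X \<Longrightarrow> y \<notin> (\<Union>n. D n) \<Longrightarrow>
                  \<exists>N k. openin X N \<and> y \<in> N \<and> (\<forall>n\<ge>k. N \<inter> D n = {})"
  shows "closedin X (\<Union>n. D n)"
  unfolding closedin_def
proof
  show "(\<Union>n. D n) \<subseteq> topspace X"
    using closedin_subset[OF closed] by (simp add: UN_least)
  show "openin X (topspace X - (\<Union>n. D n))"
  proof (subst openin_subopen, intro ballI)
    fix y assume y: "y \<in> topspace X - (\<Union>n. D n)"
    then obtain N k where N: "openin X N" "y \<in> N" "\<forall>n\<ge>k. N \<inter> D n = {}"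
      using nbhd[of y] y by blast
    have "closedin X (\<Union>n<k. D n)"
      by (intro closedin_Union) (auto simp: closed)
    then have "openin X (N - (\<Union>n<k. D n))"
      using N(1) by (simp add: openin_diff)
    moreover have "N \<inter> D n = {}" if "n \<notin> {..<k}" for n
      using N(3) that by simp
    then have "N - (\<Union>n<k. D n) \<subseteq> topspace X - (\<Union>n. D n)"
      using openin_subset[OF N(1)] by blast
    ultimately show "\<exists>T. openin X T \<and> y \<in> T \<and> T \<subseteq> topspace X - (\<Union>n. D n)"
      using N(2) y by blast
  qed
qed

lemma clopen_disjointed:
  fixes q :: "nat \<Rightarrow> 'a set"
  assumes "\<And>n. closedin X (q n)" "\<And>n. openin X (q n)"
  shows "closedin X (disjointed q n)" "openin X (disjointed q n)"
  using assms unfolding disjointed_def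
  by (auto intro!: closedin_diff openin_diff closedin_Union openin_Union)

lemma C_sets_obtain_clopen_separation:
  assumes X: "second_countable X" and F: "C_set X F" and G: "C_set X G" and "F \<inter> G = {}"
  obtains D where "closedin X D" "openin X D" "F \<subseteq> D" "D \<inter> G = {}"
proof (cases "topspace X = {}")
  case True
  then show thesis
    using that C_set_subset_topspace[OF F] by blast
next
  case False
  define \<Q> where "\<Q> = {Q. closedin X Q \<and> openin X Q \<and> (Q \<inter> F = {} \<or> Q \<inter> G = {})}"
  have cover: "topspace X \<subseteq> \<Union>\<Q>"
  proof
    fix z assume z: "z \<in> topspace X"
    have "z \<notin> F \<or> z \<notin> G"
      using \<open>F \<inter> G = {}\<close> by blast
    then obtain U where "closedin X U" "openin X U" "z \<notin> U" "F \<subseteq> U \<or> G \<subseteq> U"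
      using C_set_obtain_clopen_superset[OF F z] C_set_obtain_clopen_superset[OF G z] by metis
    then have "topspace X - U \<in> \<Q>"
      unfolding \<Q>_def by blast
    then show "z \<in> \<Union>\<Q>"
      using z \<open>z \<notin> U\<close> by blast
  qed
  have "\<And>Q. Q \<in> \<Q> \<Longrightarrow> openin X Q"
    unfolding \<Q>_def by blast
  then obtain q :: "nat \<Rightarrow> 'a set" where q: "\<And>n. q n \<in> \<Q>" "topspace X \<subseteq> (\<Union>n. q n)"
    using second_countable_obtain_subcover_sequence[OF X _ cover False] by blast
  have q_clopen: "closedin X (q n)" "openin X (q n)" for n
    using q(1) unfolding \<Q>_def by auto
  define E where "E n = (if q n \<inter> G = {} then disjointed q n else {})" for n
  have E_clopen: "closedin X (E n)" "openin X (E n)" for n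
    unfolding E_def using clopen_disjointed[OF q_clopen] by auto
  show thesis
  proof
    show "openin X (\<Union>n. E n)"
      using E_clopen by blast
    show "closedin X (\<Union>n. E n)"
    proof (rule closedin_Union_eventually_disjoint[OF E_clopen(1)])
      fix y assume "y \<in> topspace X"
      then obtain k where "y \<in> q k"
        using q(2) by blast
      moreover have "q k \<inter> E n = {}" if "n \<ge> Suc k" for n
      proof -
        have "k \<in> {0..<n}"
          using that by simp
        then have "disjointed q n \<inter> q k = {}"
          unfolding disjointed_def by blast
        then show ?thesis
          unfolding E_def by auto
      qed
      ultimately show "\<exists>N k. openin X N \<and> y \<in> N \<and> (\<forall>n\<ge>k. N \<inter> E n = {})"
        using q_clopen(2)[of k] by (intro exI[of _ "q k"] exI[of _ "Suc k"]) simp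
    qed
    show "F \<subseteq> (\<Union>n. E n)"
    proof
      fix y assume "y \<in> F"
      then have "y \<in> (\<Union>n. disjointed q n)"
        using q(2) C_set_subset_topspace[OF F] by (auto simp: UN_disjointed_eq)
      then obtain m where m: "y \<in> disjointed q m"
        by blast
      then have "q m \<inter> F \<noteq> {}"
        using m disjointed_subset[of q m] \<open>y \<in> F\<close> by blast
      then have "q m \<inter> G = {}"
        using q(1)[of m] unfolding \<Q>_def by blast
      then have "y \<in> E m"
        using m unfolding E_def by simp
      then show "y \<in> (\<Union>n. E n)"
        by blast
    qed
    have "E n \<inter> G = {}" for n
      unfolding E_def using disjointed_subset[of q n] by auto
    then show "(\<Union>n. E n) \<inter> G = {}"
      by blast
  qed
qed

lemma closed_sigmaC_set_obtain_clopen_separation: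
  assumes X: "second_countable X" and az: "almost_zero_dimensional X"
    and A: "closedin X A" "sigmaC_set X A" and x: "x \<in> topspace X" "x \<notin> A"
  obtains D where "closedin X D" "openin X D" "A \<subseteq> D" "x \<notin> D"
proof -
  obtain F :: "nat \<Rightarrow> 'a set" where F: "\<And>n. C_set X (F n)" and A_eq: "A = (\<Union>n. F n)"
    using A(2) unfolding sigmaC_set_def by blast
  define \<U> where "\<U> = {U. openin X U \<and> (\<exists>W. C_set X W \<and> U \<subseteq> W \<and> W \<inter> A = {})}"
  have cover: "topspace X - A \<subseteq> \<Union>\<U>"
  proof
    fix y assume y: "y \<in> topspace X - A"
    have "openin X (topspace X - A)"
      using A(1) by blast
    then have "\<exists>U W. openin X U \<and> C_set X W \<and> y \<in> U \<and> U \<subseteq> W \<and> W \<subseteq> topspace X - A"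
      using az y unfolding almost_zero_dimensional_def neighbourhood_base_of by simp
    then show "y \<in> \<Union>\<U>"
      unfolding \<U>_def by blast
  qed
  have \<U>_open: "\<And>U. U \<in> \<U> \<Longrightarrow> openin X U"
    unfolding \<U>_def by blast
  have "topspace X - A \<noteq> {}"
    using x by blast
  then obtain q :: "nat \<Rightarrow> 'a set" where q: "\<And>k. q k \<in> \<U>" "topspace X - A \<subseteq> (\<Union>k. q k)"
    using second_countable_obtain_subcover_sequence[OF X \<U>_open cover] by blast
  have "\<forall>k. \<exists>W. C_set X W \<and> q k \<subseteq> W \<and> W \<inter> A = {}"
    using q(1) unfolding \<U>_def by blast
  then obtain W :: "nat \<Rightarrow> 'a set"
    where W: "\<And>k. C_set X (W k)" "\<And>k. q k \<subseteq> W k" "\<And>k. W k \<inter> A = {}"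
    by metis
  have "\<forall>n k. \<exists>E. closedin X E \<and> openin X E \<and> F n \<subseteq> E \<and> E \<inter> W k = {}"
  proof (intro allI)
    fix n k
    have "F n \<inter> W k = {}"
      using W(3)[of k] A_eq by blast
    then show "\<exists>E. closedin X E \<and> openin X E \<and> F n \<subseteq> E \<and> E \<inter> W k = {}"
      by (rule C_sets_obtain_clopen_separation[OF X F W(1)]) blast
  qed
  then obtain E :: "nat \<Rightarrow> nat \<Rightarrow> 'a set" where
    E: "\<And>n k. closedin X (E n k)" "\<And>n k. openin X (E n k)"
       "\<And>n k. F n \<subseteq> E n k" "\<And>n k. E n k \<inter> W k = {}"
    by metis
  have "\<forall>n. \<exists>P. closedin X P \<and> openin X P \<and> F n \<subseteq> P \<and> x \<notin> P"
  proof
    fix n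
    have "x \<notin> F n"
      using x(2) A_eq by blast
    then show "\<exists>P. closedin X P \<and> openin X P \<and> F n \<subseteq> P \<and> x \<notin> P"
      by (rule C_set_obtain_clopen_superset[OF F x(1)]) blast
  qed
  then obtain P :: "nat \<Rightarrow> 'a set" where
    P: "\<And>n. closedin X (P n)" "\<And>n. openin X (P n)" "\<And>n. F n \<subseteq> P n" "\<And>n. x \<notin> P n"
    by metis
  \<comment> \<open>Intersecting with \<open>E n k\<close> for \<open>k \<le> n\<close> keeps all pieces \<open>D n\<close> with \<open>n \<ge> k\<close>
    away from \<open>q k\<close>.\<close>
  define D where "D n = P n \<inter> (\<Inter>k\<le>n. E n k)" for n
  have D_clopen: "closedin X (D n)" "openin X (D n)" for n
    unfolding D_def using P E by (auto intro!: closedin_Int openin_Int closedin_Inter openin_Inter)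
  have D_sub_P: "D n \<subseteq> P n" for n
    unfolding D_def by blast
  have D_sub_E: "D n \<subseteq> E n k" if "k \<le> n" for n k
    unfolding D_def using that by blast
  have A_sub_D: "A \<subseteq> (\<Union>n. D n)"
  proof -
    have "F n \<subseteq> D n" for n
      unfolding D_def using P(3)[of n] E(3)[of n] by blast
    then show ?thesis
      unfolding A_eq by blast
  qed
  show thesis
  proof
    show "openin X (\<Union>n. D n)"
      using D_clopen(2) by blast
    show "x \<notin> (\<Union>n. D n)"
      using D_sub_P P(4) by blast
    show "closedin X (\<Union>n. D n)"
    proof (rule closedin_Union_eventually_disjoint[OF D_clopen(1)])
      fix y assume "y \<in> topspace X" "y \<notin> (\<Union>n. D n)"
      then obtain k where "y \<in> q k"
        using q(2) A_sub_D by blast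
      moreover have "\<forall>n\<ge>k. q k \<inter> D n = {}"
        using W(2)[of k] E(4) D_sub_E by blast
      moreover have "openin X (q k)"
        using \<U>_open q(1) by blast
      ultimately show "\<exists>N k. openin X N \<and> y \<in> N \<and> (\<forall>n\<ge>k. N \<inter> D n = {})"
        by blast
    qed
  qed (fact A_sub_D)
qed

lemma clopen_diff_if_frontier_subset:
  assumes "openin X B" "closedin X D" "openin X D" "X frontier_of B \<subseteq> D"
  shows "closedin X (B - D)" "openin X (B - D)"
proof -
  have "X closure_of B = B \<union> X frontier_of B"
    using interior_of_union_frontier_of[of X B] assms(1) by (simp add: interior_of_openin)
  then have "B - D = X closure_of B - D"
    using assms(4) by blast
  then show "closedin X (B - D)"
    using assms(3) by (simp add: closedin_diff)
  show "openin X (B - D)"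
    using assms(1,2) by (rule openin_diff)
qed

theorem corollary4p5:
  fixes X :: "'a topology"
  assumes "metrizable_space X" and "separable_space X"
    and "almost_zero_dimensional X"
    and "rim_sigmaC X"
  shows "X dim_le 0"
proof -
  have X: "second_countable X"
    using assms(1,2) by (rule metrizable_separable_imp_second_countable)
  obtain \<B> where \<B>: "\<And>B. B \<in> \<B> \<Longrightarrow> openin X B \<and> sigmaC_set X (X frontier_of B)"
    and \<B>_base: "\<And>U. openin X U \<Longrightarrow> \<exists>\<V>. \<V> \<subseteq> \<B> \<and> \<Union>\<V> = U"
    using assms(4) unfolding rim_sigmaC_def by blast
  have "\<exists>V. (closedin X V \<and> openin X V) \<and> x \<in> V \<and> V \<subseteq> U" if "openin X U" "x \<in> U" for U x
  proof -
    obtain B where B: "B \<in> \<B>" "x \<in> B" "B \<subseteq> U"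
      using \<B>_base[OF \<open>openin X U\<close>] \<open>x \<in> U\<close> by blast
    then have "openin X B"
      using \<B> by blast
    then have "x \<in> topspace X - X frontier_of B"
      using B(2) openin_subset by (force simp: frontier_of_def interior_of_openin)
    then obtain D where D: "closedin X D" "openin X D" "X frontier_of B \<subseteq> D" "x \<notin> D"
      using closed_sigmaC_set_obtain_clopen_separation[OF X assms(3) closedin_frontier_of] \<B> B(1)
      by (metis Diff_iff)
    then show ?thesis
      using clopen_diff_if_frontier_subset[OF \<open>openin X B\<close> D(1-3)] B(2,3) by blast
  qed
  then show ?thesis
    unfolding dimension_le_0_neighbourhood_base_of_clopen by (simp add: open_neighbourhood_base_of)
qed

end
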